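(* Let $Y'\subseteq Y$ and $Z'\subseteq Z$ and let $f\in\mathbb{F}[Y',Z']$. Let $a=\min\{|Y'|,|Z'|\}$. Then $\mathrm{maxrank}(M_f)\le 2^a$.
   Context: $\mathbb{F}$ is a field, $Y=\{y_1,\dots,y_m\}$ and $Z=\{z_1,\dots,z_m\}$ are disjoint sets of variables. For $f\in\mathbb{F}[Y,Z]$, the polynomial coefficient matrix $M_f$ is the $2^m\times 2^m$ matrix with entries in $\mathbb{F}[Y,Z]$, rows indexed by monic multilinear monomials $p$ in $Y$ and columns by monic multilinear monomials $q$ in $Z$, where $M_f(p,q)=G$ if and only if $f$ can be uniquely written as $f=pq\,G+Q$ with $G,Q\in\mathbb{F}[Y,Z]$ such that $G$ contains no variable other than those present in $p$ and $q$, and $Q$ has no monomial which is divisible by $pq$ and contains only variables present in $p$ and $q$. For $S:Y\cup Z\to\mathbb{F}$, $M_f|_S$ is obtained by evaluating each entry at $S$, and $\mathrm{maxrank}(M_f)=\max_S\mathrm{rank}(M_f|_S)$. *)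

theory Defs
  imports "HOL-Library.Poly_Mapping" "Jordan_Normal_Form.DL_Rank"
begin

(* Variables: Inl i = y_i, Inr i = z_i  (indices i < m are used). *)
type_synonym var = "nat + nat"

type_synonym 'a mpoly = "(var \<Rightarrow>\<^sub>0 nat) \<Rightarrow>\<^sub>0 'a"

definition mpoly_vars :: "'a::zero mpoly \<Rightarrow> var set" where
  "mpoly_vars f = \<Union> (Poly_Mapping.keys ` Poly_Mapping.keys f)"

definition ml_mono :: "nat set \<Rightarrow> nat set \<Rightarrow> (var \<Rightarrow>\<^sub>0 nat)" where
  "ml_mono P Q = (\<Sum>i\<in>P. Poly_Mapping.single (Inl i) 1) + (\<Sum>j\<in>Q. Poly_Mapping.single (Inr j) 1)"

(* entry M_f(p,q): the unique G with f = p q G + R, G only in the variables of p q,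
   R without monomials divisible by p q using only variables of p q *)
definition coeff_entry :: "'a::field mpoly \<Rightarrow> nat set \<Rightarrow> nat set \<Rightarrow> 'a mpoly" where
  "coeff_entry f P Q = (THE G.
     mpoly_vars G \<subseteq> Poly_Mapping.keys (ml_mono P Q) \<and>
     (\<exists>R. f = Poly_Mapping.single (ml_mono P Q) 1 * G + R \<and>
          (\<forall>\<nu>\<in>Poly_Mapping.keys R. \<not> ((\<exists>\<rho>. \<nu> = ml_mono P Q + \<rho>) \<and> Poly_Mapping.keys \<nu> \<subseteq> Poly_Mapping.keys (ml_mono P Q)))))"

definition mpoly_eval :: "(var \<Rightarrow> 'a::field) \<Rightarrow> 'a mpoly \<Rightarrow> 'a" where
  "mpoly_eval S f = (\<Sum>\<mu>\<in>Poly_Mapping.keys f. Poly_Mapping.lookup f \<mu> * (\<Prod>v\<in>Poly_Mapping.keys \<mu>. S v ^ Poly_Mapping.lookup \<mu> v))"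

(* enumeration of the subsets of {0..<m} (equivalently of the monic multilinear
   monomials in m variables) by the numbers 0..<2^m via binary expansion *)
definition idx_set :: "nat \<Rightarrow> nat \<Rightarrow> nat set" where
  "idx_set m i = {j. j < m \<and> bit i j}"

definition coeff_mat_eval :: "nat \<Rightarrow> 'a::field mpoly \<Rightarrow> (var \<Rightarrow> 'a) \<Rightarrow> 'a mat" where
  "coeff_mat_eval m f S =
     mat (2^m) (2^m) (\<lambda>(i, j). mpoly_eval S (coeff_entry f (idx_set m i) (idx_set m j)))"

definition maxrank :: "nat \<Rightarrow> 'a::field mpoly \<Rightarrow> nat" where
  "maxrank m f = Max {vec_space.rank (2^m) (coeff_mat_eval m f S) | S. True}"

end

theory Submission
  imports Defs
begin

text \<open>If f avoids a variable of the monomial p q, no monomial of f is divisible by p q,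
  so the entry M_f(p,q) vanishes. Hence only rows p over Y' and columns q over Z' can be
  nonzero; there are at most 2^|Y'| of the former and 2^|Z'| of the latter, and a matrix
  supported on k rows (or k columns) has rank at most k.\<close>

lemma rank_le_card_sum_products:
  fixes A :: "'a::field mat" and u v :: "'k \<Rightarrow> nat \<Rightarrow> 'a"
  assumes "finite K" "A \<in> carrier_mat n nc"
    and "\<And>r c. r < n \<Longrightarrow> c < nc \<Longrightarrow> A $$ (r, c) = (\<Sum>k\<in>K. u k r * v k c)"
  shows "vec_space.rank n A \<le> card K"
  using assms
proof (induction K arbitrary: A rule: finite_induct)
  case empty
  then have "A = 0\<^sub>m n nc" by (intro eq_matI) auto
  then show ?case using vec_space.rank_0I by simp
next
  case (insert k K)
  define B where "B = mat n nc (\<lambda>(r, c). u k r * v k c)"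
  define C where "C = mat n nc (\<lambda>(r, c). \<Sum>l\<in>K. u l r * v l c)"
  have carrier: "B \<in> carrier_mat n nc" "C \<in> carrier_mat n nc"
    unfolding B_def C_def by auto
  have "A = B + C"
    using insert.prems insert.hyps unfolding B_def C_def by (intro eq_matI) auto
  have "vec_space.rank n B \<le> 1"
    by (rule vec_space.rank_le_1_product_entries[OF carrier(1)]) (auto simp: B_def)
  moreover have "vec_space.rank n C \<le> card K"
    by (rule insert.IH[OF carrier(2)]) (auto simp: C_def)
  moreover have "vec_space.rank n A \<le> vec_space.rank n B + vec_space.rank n C"
    using vec_space.rank_subadditive[OF carrier] \<open>A = B + C\<close> by simp
  ultimately show ?case using insert.hyps by simp
qed

lemma rank_le_card_nonzero_rows:
  fixes A :: "'a::field mat"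
  assumes "finite I" "A \<in> carrier_mat n nc"
    and "\<And>r c. r < n \<Longrightarrow> c < nc \<Longrightarrow> r \<notin> I \<Longrightarrow> A $$ (r, c) = 0"
  shows "vec_space.rank n A \<le> card I"
  by (rule rank_le_card_sum_products[OF assms(1,2),
        of "\<lambda>i r. if r = i then 1 else 0" "\<lambda>i c. A $$ (i, c)"])
     (use assms(1,3) in \<open>auto simp: if_distrib[where f = "\<lambda>x. x * _"] cong: if_cong\<close>)

lemma rank_le_card_nonzero_cols:
  fixes A :: "'a::field mat"
  assumes "finite J" "A \<in> carrier_mat n nc"
    and "\<And>r c. r < n \<Longrightarrow> c < nc \<Longrightarrow> c \<notin> J \<Longrightarrow> A $$ (r, c) = 0"
  shows "vec_space.rank n A \<le> card J"
  by (rule rank_le_card_sum_products[OF assms(1,2),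
        of "\<lambda>j r. A $$ (r, j)" "\<lambda>j c. if c = j then 1 else 0"])
     (use assms(1,3) in \<open>auto simp: if_distrib[where f = "\<lambda>x. _ * x"] cong: if_cong\<close>)

lemma keys_ml_mono:
  assumes "finite P" "finite Q"
  shows "Poly_Mapping.keys (ml_mono P Q) = Inl ` P \<union> Inr ` Q"
proof -
  have "Poly_Mapping.lookup (ml_mono P Q) x = (if x \<in> Inl ` P \<union> Inr ` Q then 1 else 0)" for x
    using assms by (cases x) (auto simp: ml_mono_def lookup_add lookup_sum lookup_single when_def)
  then show ?thesis by (simp add: in_keys_iff set_eq_iff)
qed

lemma lookup_single_one_mult_add:
  fixes G :: "'a::field mpoly"
  shows "Poly_Mapping.lookup (Poly_Mapping.single \<mu> 1 * G) (\<mu> + \<nu>) = Poly_Mapping.lookup G \<nu>"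
  by (simp add: lookup_mult lookup_single when_mult)

lemma coeff_entry_eq_0_if_no_multiples:
  fixes f :: "'a::field mpoly"
  assumes no_multiple: "\<And>\<rho>. Poly_Mapping.lookup f (ml_mono P Q + \<rho>) = 0"
  shows "coeff_entry f P Q = 0"
  unfolding coeff_entry_def
proof (rule the_equality)
  let ?\<mu> = "ml_mono P Q"
  show "mpoly_vars 0 \<subseteq> Poly_Mapping.keys ?\<mu> \<and>
     (\<exists>R. f = Poly_Mapping.single ?\<mu> 1 * 0 + R \<and>
          (\<forall>\<nu>\<in>Poly_Mapping.keys R. \<not> ((\<exists>\<rho>. \<nu> = ?\<mu> + \<rho>) \<and> Poly_Mapping.keys \<nu> \<subseteq> Poly_Mapping.keys ?\<mu>)))"
    using no_multiple by (auto simp: mpoly_vars_def in_keys_iff)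
  fix G :: "'a mpoly"
  assume "mpoly_vars G \<subseteq> Poly_Mapping.keys ?\<mu> \<and>
     (\<exists>R. f = Poly_Mapping.single ?\<mu> 1 * G + R \<and>
          (\<forall>\<nu>\<in>Poly_Mapping.keys R. \<not> ((\<exists>\<rho>. \<nu> = ?\<mu> + \<rho>) \<and> Poly_Mapping.keys \<nu> \<subseteq> Poly_Mapping.keys ?\<mu>)))"
  then obtain R where vars_G: "mpoly_vars G \<subseteq> Poly_Mapping.keys ?\<mu>"
    and f_eq: "f = Poly_Mapping.single ?\<mu> 1 * G + R"
    and R: "\<forall>\<nu>\<in>Poly_Mapping.keys R. \<not> ((\<exists>\<rho>. \<nu> = ?\<mu> + \<rho>) \<and> Poly_Mapping.keys \<nu> \<subseteq> Poly_Mapping.keys ?\<mu>)"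
    by blast
  have "Poly_Mapping.lookup G \<nu> = 0" for \<nu>
  proof (rule ccontr)
    assume "Poly_Mapping.lookup G \<nu> \<noteq> 0"
    then have "\<nu> \<in> Poly_Mapping.keys G" by (simp add: in_keys_iff)
    then have "Poly_Mapping.keys \<nu> \<subseteq> Poly_Mapping.keys ?\<mu>"
      using vars_G unfolding mpoly_vars_def by blast
    then have "Poly_Mapping.keys (?\<mu> + \<nu>) \<subseteq> Poly_Mapping.keys ?\<mu>"
      using keys_add[of ?\<mu> \<nu>] by blast
    then have "Poly_Mapping.lookup R (?\<mu> + \<nu>) = 0"
      using R by (auto simp: in_keys_iff)
    then have "Poly_Mapping.lookup f (?\<mu> + \<nu>) = Poly_Mapping.lookup G \<nu>"
      using f_eq by (simp add: lookup_add lookup_single_one_mult_add)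
    with no_multiple \<open>Poly_Mapping.lookup G \<nu> \<noteq> 0\<close> show False by simp
  qed
  then show "G = 0" by (simp add: poly_mapping_eqI)
qed

lemma coeff_entry_eq_0_if_missing_var:
  fixes f :: "'a::field mpoly"
  assumes "x \<in> Poly_Mapping.keys (ml_mono P Q)" "x \<notin> mpoly_vars f"
  shows "coeff_entry f P Q = 0"
proof (rule coeff_entry_eq_0_if_no_multiples)
  fix \<rho>
  have "x \<in> Poly_Mapping.keys (ml_mono P Q + \<rho>)"
    using assms(1) by (simp add: in_keys_iff lookup_add)
  then show "Poly_Mapping.lookup f (ml_mono P Q + \<rho>) = 0"
    using assms(2) unfolding mpoly_vars_def by (metis UN_iff in_keys_iff)
qed

lemma coeff_entry_eq_0_outside_vars:
  fixes f :: "'a::field mpoly"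
  assumes "finite P" "finite Q" "mpoly_vars f \<subseteq> Inl ` Y \<union> Inr ` Z"
    and "\<not> (P \<subseteq> Y \<and> Q \<subseteq> Z)"
  shows "coeff_entry f P Q = 0"
proof -
  obtain x where "x \<in> Inl ` P \<union> Inr ` Q" "x \<notin> Inl ` Y \<union> Inr ` Z"
    using assms(4) by blast
  then show ?thesis
    using assms(1-3) by (intro coeff_entry_eq_0_if_missing_var) (auto simp: keys_ml_mono)
qed

lemma idx_set_subset: "idx_set m i \<subseteq> {..<m}"
  unfolding idx_set_def by auto

lemma finite_idx_set: "finite (idx_set m i)"
  using finite_subset[OF idx_set_subset] by blast

lemma inj_on_idx_set: "inj_on (idx_set m) {..<2 ^ m}"
proof (rule inj_onI)
  fix i j :: nat
  assume "i \<in> {..<2 ^ m}" "j \<in> {..<2 ^ m}" and eq: "idx_set m i = idx_set m j"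
  then have "take_bit m i = i" "take_bit m j = j"
    by (auto simp: take_bit_nat_eq_self_iff)
  then have "bit i n = bit j n" for n
    using eq unfolding idx_set_def by (cases "n < m") (blast, metis bit_take_bit_iff)
  then show "i = j" by (simp add: bit_eq_iff)
qed

lemma card_idx_set_subset_le:
  assumes "A \<subseteq> {..<m}"
  shows "card {i \<in> {..<2 ^ m}. idx_set m i \<subseteq> A} \<le> 2 ^ card A"
proof -
  have "finite A" using assms finite_subset by blast
  have "card {i \<in> {..<2 ^ m}. idx_set m i \<subseteq> A} = card (idx_set m ` {i \<in> {..<2 ^ m}. idx_set m i \<subseteq> A})"
    by (rule card_image[symmetric]) (rule inj_on_subset[OF inj_on_idx_set], blast)
  also have "\<dots> \<le> card (Pow A)"
    using \<open>finite A\<close> by (intro card_mono) auto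
  also have "\<dots> = 2 ^ card A"
    using \<open>finite A\<close> by (simp add: card_Pow)
  finally show ?thesis .
qed

lemma rank_coeff_mat_eval_le:
  fixes f :: "'a::field mpoly"
  assumes "Y \<subseteq> {..<m}" "Z \<subseteq> {..<m}" "mpoly_vars f \<subseteq> Inl ` Y \<union> Inr ` Z"
  shows "vec_space.rank (2 ^ m) (coeff_mat_eval m f S) \<le> 2 ^ min (card Y) (card Z)"
proof -
  let ?A = "coeff_mat_eval m f S"
  have carrier: "?A \<in> carrier_mat (2 ^ m) (2 ^ m)"
    unfolding coeff_mat_eval_def by auto
  have entry_0: "?A $$ (i, j) = 0"
    if "i < 2 ^ m" "j < 2 ^ m" "\<not> (idx_set m i \<subseteq> Y \<and> idx_set m j \<subseteq> Z)" for i j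
  proof -
    have "coeff_entry f (idx_set m i) (idx_set m j) = 0"
      using finite_idx_set finite_idx_set assms(3) that(3) by (rule coeff_entry_eq_0_outside_vars)
    then show ?thesis
      using that(1,2) by (simp add: coeff_mat_eval_def mpoly_eval_def)
  qed
  have "vec_space.rank (2 ^ m) ?A \<le> 2 ^ card Y"
  proof -
    have "vec_space.rank (2 ^ m) ?A \<le> card {i \<in> {..<2 ^ m}. idx_set m i \<subseteq> Y}"
      by (rule rank_le_card_nonzero_rows[OF _ carrier]) (simp, blast intro: entry_0)
    also have "\<dots> \<le> 2 ^ card Y"
      using card_idx_set_subset_le[OF assms(1)] .
    finally show ?thesis .
  qed
  moreover have "vec_space.rank (2 ^ m) ?A \<le> 2 ^ card Z"
  proof -
    have "vec_space.rank (2 ^ m) ?A \<le> card {j \<in> {..<2 ^ m}. idx_set m j \<subseteq> Z}"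
      by (rule rank_le_card_nonzero_cols[OF _ carrier]) (simp, blast intro: entry_0)
    also have "\<dots> \<le> 2 ^ card Z"
      using card_idx_set_subset_le[OF assms(2)] .
    finally show ?thesis .
  qed
  ultimately show ?thesis by (simp add: min_def)
qed

theorem proposition1:
  fixes m :: nat and Y' Z' :: "nat set" and f :: "'a::field mpoly"
  assumes "Y' \<subseteq> {..<m}" and "Z' \<subseteq> {..<m}"
    and "mpoly_vars f \<subseteq> Inl ` Y' \<union> Inr ` Z'"
  shows "maxrank m f \<le> 2 ^ min (card Y') (card Z')"
proof -
  let ?ranks = "{vec_space.rank (2 ^ m) (coeff_mat_eval m f S) | S. True}"
  have "?ranks \<subseteq> {..2 ^ min (card Y') (card Z')}"
    using rank_coeff_mat_eval_le[OF assms] by blast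
  then have "finite ?ranks"
    by (rule finite_subset) simp
  moreover have "?ranks \<noteq> {}" by blast
  ultimately show ?thesis
    unfolding maxrank_def using rank_coeff_mat_eval_le[OF assms] by (subst Max_le_iff) auto
qed

end
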